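(* Let $A$ be a noetherian algebra with a dimension function $\partial$, and let $d$ be a positive integer. Suppose $$X:\ 0\to X^0\xrightarrow{f^0}X^1\xrightarrow{f^1}\cdots\to X^d\xrightarrow{f^d}X^{d+1}\to\cdots$$ is a complex of finitely generated right $A$-modules with cohomology $H^i$ such that: (1) $\operatorname{dep}X^i\ge d-i$ for all $i\ge0$; (2) $H^i=0$ for all $i\ge d$; (3) each $H^i$ has $\partial(H^i)\le0$, for all $i\ge0$. Then $X$ is exact.
   Context: A dimension function on right $A$-modules is a function $\partial$ with values in $\mathbb{R}_{\ge0}\cup\{\pm\infty\}$ such that $\partial(M)=-\infty$ iff $M=0$, and $\partial(M)\ge\max\{\partial(N),\partial(M/N)\}$ for every submodule $N\subseteq M$. For a finitely generated right $A$-module $M$, $\operatorname{dep}M=\operatorname{dep}_AM=\inf\{i:\operatorname{Ext}^i_A(S,M)\ne0\text{ for some finitely generated right }A\text{-module }S\text{ with }\partial(S)\le0\}\in\mathbb{N}\cup\{+\infty\}$. *)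

theory Defs
  imports "HOL-Library.Extended_Real"
begin

text \<open>Vectors are finitely supported functions nat => 'a (the free right module of countable rank);
 right scalar action is componentwise right multiplication. Every (countably generated, in
 particular every finitely generated) right A-module is isomorphic to a subquotient N/K with
 K \<subseteq> N submodules of this free module; a module is represented by the pair (N, K).\<close>

type_synonym 'a vec = "nat \<Rightarrow> 'a"
type_synonym 'a sq = "'a vec set \<times> 'a vec set"

definition vzero :: "'a::ring_1 vec" where "vzero = (\<lambda>_. 0)"
definition vadd :: "'a::ring_1 vec \<Rightarrow> 'a vec \<Rightarrow> 'a vec" where "vadd u v = (\<lambda>i. u i + v i)"
definition vsub :: "'a::ring_1 vec \<Rightarrow> 'a vec \<Rightarrow> 'a vec" where "vsub u v = (\<lambda>i. u i - v i)"
definition vsmul :: "'a::ring_1 vec \<Rightarrow> 'a \<Rightarrow> 'a vec" where "vsmul v a = (\<lambda>i. v i * a)"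

definition fvec :: "'a::ring_1 vec set" where "fvec = {v. finite {i. v i \<noteq> 0}}"

definition Fr :: "nat \<Rightarrow> 'a::ring_1 vec set" where "Fr n = {v. \<forall>i\<ge>n. v i = 0}"

definition rsubmod :: "'a::ring_1 vec set \<Rightarrow> bool" where
  "rsubmod N \<longleftrightarrow> N \<subseteq> fvec \<and> vzero \<in> N \<and> (\<forall>u\<in>N. \<forall>v\<in>N. vadd u v \<in> N)
     \<and> (\<forall>v\<in>N. \<forall>a. vsmul v a \<in> N)"

definition lincomb :: "'a::ring_1 vec set \<Rightarrow> ('a vec \<Rightarrow> 'a) \<Rightarrow> 'a vec" where
  "lincomb G c = (\<lambda>i. \<Sum>g\<in>G. g i * c g)"

definition sq_valid :: "'a::ring_1 sq \<Rightarrow> bool" where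
  "sq_valid M \<longleftrightarrow> rsubmod (fst M) \<and> rsubmod (snd M) \<and> snd M \<subseteq> fst M"

definition sq_fg :: "'a::ring_1 sq \<Rightarrow> bool" where
  "sq_fg M \<longleftrightarrow> (\<exists>G. finite G \<and> G \<subseteq> fst M \<and> (\<forall>v\<in>fst M. \<exists>c. vsub v (lincomb G c) \<in> snd M))"

definition sq_zero :: "'a::ring_1 sq \<Rightarrow> bool" where
  "sq_zero M \<longleftrightarrow> fst M = snd M"

text \<open>phi is a set-theoretic lift of an A-module homomorphism N/K -> N'/K'
  (every homomorphism has such a lift, by choosing representatives)\<close>
definition hom_lift :: "'a::ring_1 sq \<Rightarrow> 'a sq \<Rightarrow> ('a vec \<Rightarrow> 'a vec) \<Rightarrow> bool" where
  "hom_lift M M' \<phi> \<longleftrightarrow>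
     (\<forall>v\<in>fst M. \<phi> v \<in> fst M') \<and> (\<forall>v\<in>snd M. \<phi> v \<in> snd M')
   \<and> (\<forall>u\<in>fst M. \<forall>v\<in>fst M. vsub (vsub (\<phi> (vadd u v)) (\<phi> u)) (\<phi> v) \<in> snd M')
   \<and> (\<forall>v\<in>fst M. \<forall>a. vsub (\<phi> (vsmul v a)) (vsmul (\<phi> v) a) \<in> snd M')"

definition sq_iso :: "'a::ring_1 sq \<Rightarrow> 'a sq \<Rightarrow> bool" where
  "sq_iso M M' \<longleftrightarrow> (\<exists>\<phi>. hom_lift M M' \<phi>
     \<and> (\<forall>v\<in>fst M. \<phi> v \<in> snd M' \<longrightarrow> v \<in> snd M)
     \<and> (\<forall>w\<in>fst M'. \<exists>v\<in>fst M. vsub (\<phi> v) w \<in> snd M'))"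

text \<open>Dimension function (values in R_{>=0} \<union> {+-\<infinity>}), on modules up to isomorphism.
  Submodules of N/K are L/K with K \<subseteq> L \<subseteq> N; the corresponding quotient is N/L.\<close>
definition dimfun :: "('a::ring_1 sq \<Rightarrow> ereal) \<Rightarrow> bool" where
  "dimfun D \<longleftrightarrow>
     (\<forall>N K. sq_valid (N, K) \<longrightarrow>
        (D (N, K) = - \<infinity> \<longleftrightarrow> N = K)
      \<and> (D (N, K) \<noteq> - \<infinity> \<longrightarrow> 0 \<le> D (N, K))
      \<and> (\<forall>L. rsubmod L \<and> K \<subseteq> L \<and> L \<subseteq> N \<longrightarrow> max (D (L, K)) (D (N, L)) \<le> D (N, K)))
   \<and> (\<forall>M M'. sq_valid M \<and> sq_valid M' \<and> sq_iso M M' \<longrightarrow> D M = D M')"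

definition mv :: "nat \<Rightarrow> nat \<Rightarrow> (nat \<Rightarrow> nat \<Rightarrow> 'a::ring_1) \<Rightarrow> 'a vec \<Rightarrow> 'a vec" where
  "mv m n E c = (\<lambda>j. if j < m then (\<Sum>k<n. E j k * c k) else 0)"

definition aug :: "nat \<Rightarrow> (nat \<Rightarrow> 'a::ring_1 vec) \<Rightarrow> 'a vec \<Rightarrow> 'a vec" where
  "aug n g c = (\<lambda>i. \<Sum>k<n. g k i * c k)"

text \<open>free resolution  ... -> A^{r 2} --D 1--> A^{r 1} --D 0--> A^{r 0} --aug--> N/K -> 0\<close>
definition free_res :: "'a::ring_1 sq \<Rightarrow> (nat \<Rightarrow> nat) \<Rightarrow> (nat \<Rightarrow> 'a vec) \<Rightarrow> (nat \<Rightarrow> nat \<Rightarrow> nat \<Rightarrow> 'a) \<Rightarrow> bool" where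
  "free_res S r g D \<longleftrightarrow>
     (\<forall>k<r 0. g k \<in> fst S)
   \<and> (\<forall>v\<in>fst S. \<exists>c\<in>Fr (r 0). vsub v (aug (r 0) g c) \<in> snd S)
   \<and> (\<forall>c\<in>Fr (r 0). aug (r 0) g c \<in> snd S \<longleftrightarrow> (\<exists>b\<in>Fr (r 1). c = mv (r 0) (r 1) (D 0) b))
   \<and> (\<forall>i. \<forall>c\<in>Fr (r (Suc i)). mv (r i) (r (Suc i)) (D i) c = vzero \<longleftrightarrow>
          (\<exists>b\<in>Fr (r (Suc (Suc i))). c = mv (r (Suc i)) (r (Suc (Suc i))) (D (Suc i)) b))"

text \<open>Hom_A(A^m, N'/K') = (N'/K')^m; precomposition with an m x n matrix E\<close>
definition codiff :: "nat \<Rightarrow> (nat \<Rightarrow> nat \<Rightarrow> 'a::ring_1) \<Rightarrow> (nat \<Rightarrow> 'a vec) \<Rightarrow> (nat \<Rightarrow> 'a vec)" where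
  "codiff m E \<psi> = (\<lambda>j t. \<Sum>k<m. \<psi> k t * E k j)"

text \<open>Ext^i_A(S, M) \<noteq> 0, computed from a free resolution of S
  (independent of the resolution; such resolutions exist for f.g. S over a noetherian ring)\<close>
definition Ext_nz :: "nat \<Rightarrow> 'a::ring_1 sq \<Rightarrow> 'a sq \<Rightarrow> bool" where
  "Ext_nz i S M \<longleftrightarrow> (\<exists>r g D. free_res S r g D \<and>
     (\<exists>\<phi>. (\<forall>k<r i. \<phi> k \<in> fst M)
        \<and> (\<forall>j<r (Suc i). codiff (r i) (D i) \<phi> j \<in> snd M)
        \<and> \<not> (case i of
               0 \<Rightarrow> (\<forall>k<r 0. \<phi> k \<in> snd M)
             | Suc i' \<Rightarrow> (\<exists>\<psi>. (\<forall>k<r i'. \<psi> k \<in> fst M)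
                  \<and> (\<forall>k<r i. vsub (\<phi> k) (codiff (r i') (D i') \<psi> k) \<in> snd M)))))"

definition dep :: "('a::ring_1 sq \<Rightarrow> ereal) \<Rightarrow> 'a sq \<Rightarrow> enat" where
  "dep D M = (INF i \<in> {i. \<exists>S. sq_valid S \<and> sq_fg S \<and> D S \<le> 0 \<and> Ext_nz i S M}. enat i)"

definition is_complex :: "(nat \<Rightarrow> 'a::ring_1 sq) \<Rightarrow> (nat \<Rightarrow> 'a vec \<Rightarrow> 'a vec) \<Rightarrow> bool" where
  "is_complex X f \<longleftrightarrow> (\<forall>i. sq_valid (X i) \<and> sq_fg (X i) \<and> hom_lift (X i) (X (Suc i)) (f i)
      \<and> (\<forall>v\<in>fst (X i). f (Suc i) (f i v) \<in> snd (X (Suc (Suc i)))))"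

definition cocycles :: "(nat \<Rightarrow> 'a::ring_1 sq) \<Rightarrow> (nat \<Rightarrow> 'a vec \<Rightarrow> 'a vec) \<Rightarrow> nat \<Rightarrow> 'a vec set" where
  "cocycles X f i = {v\<in>fst (X i). f i v \<in> snd (X (Suc i))}"

definition coboundaries :: "(nat \<Rightarrow> 'a::ring_1 sq) \<Rightarrow> (nat \<Rightarrow> 'a vec \<Rightarrow> 'a vec) \<Rightarrow> nat \<Rightarrow> 'a vec set" where
  "coboundaries X f i = (case i of 0 \<Rightarrow> snd (X 0)
      | Suc i' \<Rightarrow> {vadd (f i' u) k | u k. u \<in> fst (X i') \<and> k \<in> snd (X i)})"

definition cohom :: "(nat \<Rightarrow> 'a::ring_1 sq) \<Rightarrow> (nat \<Rightarrow> 'a vec \<Rightarrow> 'a vec) \<Rightarrow> nat \<Rightarrow> 'a sq" where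
  "cohom X f i = (cocycles X f i, coboundaries X f i)"

definition algebra_over :: "('k::field \<Rightarrow> 'a::ring_1) \<Rightarrow> bool" where
  "algebra_over \<iota> \<longleftrightarrow> \<iota> 1 = 1 \<and> (\<forall>x y. \<iota> (x + y) = \<iota> x + \<iota> y) \<and> (\<forall>x y. \<iota> (x * y) = \<iota> x * \<iota> y)
     \<and> (\<forall>x a. \<iota> x * a = a * \<iota> x)"

definition noetherian_ring :: "'a::ring_1 itself \<Rightarrow> bool" where
  "noetherian_ring _ \<longleftrightarrow>
     (\<forall>I::'a set. (0 \<in> I \<and> (\<forall>x\<in>I. \<forall>y\<in>I. x + y \<in> I) \<and> (\<forall>x\<in>I. \<forall>a. x * a \<in> I)) \<longrightarrow>
        (\<exists>G. finite G \<and> G \<subseteq> I \<and> I = {\<Sum>g\<in>G. g * c g | c. True}))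
   \<and> (\<forall>I::'a set. (0 \<in> I \<and> (\<forall>x\<in>I. \<forall>y\<in>I. x + y \<in> I) \<and> (\<forall>x\<in>I. \<forall>a. a * x \<in> I)) \<longrightarrow>
        (\<exists>G. finite G \<and> G \<subseteq> I \<and> I = {\<Sum>g\<in>G. c g * g | c. True}))"

end

theory Submission
  imports Defs
begin

text \<open>By induction on \<open>m\<close>, assume \<open>H\<^sup>j = 0\<close> for \<open>j < m < d\<close>. As \<open>A\<close> is noetherian, \<open>H\<^sup>m\<close> is
  finitely generated and has a free resolution \<open>F\<close>. Exactness below \<open>m\<close> lifts the generators
  of \<open>H\<^sup>m\<close> to a map from \<open>F\<^sub>t\<close> to \<open>X\<^bsup>m - t\<^esup>\<close> for \<open>t \<le> m\<close>, compatible with the differentials. Since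
  \<open>\<partial>(H\<^sup>m) \<le> 0\<close> and \<open>dep X\<^bsup>m - t\<^esup> \<ge> d - m + t > t\<close>, the groups \<open>Ext\<^sup>t(H\<^sup>m, X\<^bsup>m - t\<^esup>)\<close> vanish, so
  starting from \<open>t = m\<close> (where \<open>X\<^sup>0\<close> has no predecessor) the lift can be corrected by a
  homotopy one step at a time down to \<open>t = 0\<close>, where the correction exhibits the generators of
  \<open>H\<^sup>m\<close> as coboundaries.\<close>

definition vcong :: "'a::ring_1 vec set \<Rightarrow> 'a vec \<Rightarrow> 'a vec \<Rightarrow> bool" where
  "vcong K x y \<longleftrightarrow> vsub x y \<in> K"

lemma rsubmod_zero: "rsubmod K \<Longrightarrow> vzero \<in> K"
  by (simp add: rsubmod_def)

lemma rsubmod_add: "rsubmod K \<Longrightarrow> u \<in> K \<Longrightarrow> v \<in> K \<Longrightarrow> vadd u v \<in> K"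
  by (simp add: rsubmod_def)

lemma rsubmod_smul: "rsubmod K \<Longrightarrow> v \<in> K \<Longrightarrow> vsmul v a \<in> K"
  by (simp add: rsubmod_def)

lemma vsub_eq_vadd_vsmul: "vsub u v = vadd u (vsmul v (-1))"
  by (simp add: vsub_def vadd_def vsmul_def)

lemma rsubmod_diff: "rsubmod K \<Longrightarrow> u \<in> K \<Longrightarrow> v \<in> K \<Longrightarrow> vsub u v \<in> K"
  by (simp add: vsub_eq_vadd_vsmul rsubmod_add rsubmod_smul)

lemma rsubmod_Int: "rsubmod A \<Longrightarrow> rsubmod B \<Longrightarrow> rsubmod (A \<inter> B)"
  by (auto simp: rsubmod_def)

lemma rsubmod_Fr: "rsubmod (Fr n :: 'a::ring_1 vec set)"
proof -
  have "Fr n \<subseteq> (fvec :: 'a vec set)"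
  proof
    fix v :: "'a vec" assume "v \<in> Fr n"
    then have "{i. v i \<noteq> 0} \<subseteq> {..<n}" by (auto simp: Fr_def not_less[symmetric])
    then show "v \<in> fvec" by (simp add: fvec_def finite_subset)
  qed
  then show ?thesis by (auto simp: rsubmod_def Fr_def vzero_def vadd_def vsmul_def)
qed

lemma vcong_refl: "rsubmod K \<Longrightarrow> vcong K x x"
  using rsubmod_zero[of K] by (simp add: vcong_def vsub_def vzero_def)

lemma vcong_sym: "rsubmod K \<Longrightarrow> vcong K x y \<Longrightarrow> vcong K y x"
  using rsubmod_smul[of K "vsub x y" "-1"]
  by (simp add: vcong_def vsub_def vsmul_def)

lemma vcong_trans: "rsubmod K \<Longrightarrow> vcong K x y \<Longrightarrow> vcong K y z \<Longrightarrow> vcong K x z"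
  using rsubmod_add[of K "vsub x y" "vsub y z"]
  by (simp add: vcong_def vsub_def vadd_def)

lemma vcong_add: "rsubmod K \<Longrightarrow> vcong K x x' \<Longrightarrow> vcong K y y' \<Longrightarrow> vcong K (vadd x y) (vadd x' y')"
  using rsubmod_add[of K "vsub x x'" "vsub y y'"]
  by (simp add: vcong_def vsub_def vadd_def algebra_simps)

lemma vcong_diff: "rsubmod K \<Longrightarrow> vcong K x x' \<Longrightarrow> vcong K y y' \<Longrightarrow> vcong K (vsub x y) (vsub x' y')"
  using rsubmod_diff[of K "vsub x x'" "vsub y y'"]
  by (simp add: vcong_def vsub_def algebra_simps)

lemma vcong_smul: "rsubmod K \<Longrightarrow> vcong K x x' \<Longrightarrow> vcong K (vsmul x a) (vsmul x' a)"
  using rsubmod_smul[of K "vsub x x'" a]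
  by (simp add: vcong_def vsub_def vsmul_def algebra_simps)

lemma vcong_mem: "rsubmod K \<Longrightarrow> vcong K x y \<Longrightarrow> y \<in> K \<Longrightarrow> x \<in> K"
  using rsubmod_add[of K "vsub x y" y]
  by (simp add: vcong_def vsub_def vadd_def)

lemma vcong_vzero_iff: "vcong K x vzero \<longleftrightarrow> x \<in> K"
  by (simp add: vcong_def vsub_def vzero_def)

lemma vcong_mono: "K \<subseteq> K' \<Longrightarrow> vcong K x y \<Longrightarrow> vcong K' x y"
  by (auto simp: vcong_def)

lemma sq_valid_vcong_mem_fst: "sq_valid M \<Longrightarrow> vcong (snd M) x y \<Longrightarrow> y \<in> fst M \<Longrightarrow> x \<in> fst M"
  by (rule vcong_mem) (auto intro: vcong_mono simp: sq_valid_def)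

lemma aug_0 [simp]: "aug 0 \<phi> a = vzero"
  by (simp add: aug_def vzero_def)

lemma aug_Suc: "aug (Suc n) \<phi> a = vadd (aug n \<phi> a) (vsmul (\<phi> n) (a n))"
  by (simp add: aug_def vadd_def vsmul_def)

lemma aug_cong: "(\<And>k. k < n \<Longrightarrow> \<phi> k = \<phi>' k) \<Longrightarrow> (\<And>k. k < n \<Longrightarrow> a k = a' k) \<Longrightarrow> aug n \<phi> a = aug n \<phi>' a'"
  by (simp add: aug_def fun_eq_iff)

lemma rsubmod_aug: "rsubmod K \<Longrightarrow> (\<And>k. k < n \<Longrightarrow> \<phi> k \<in> K) \<Longrightarrow> aug n \<phi> a \<in> K"
  by (induction n) (auto simp: aug_Suc rsubmod_zero rsubmod_add rsubmod_smul)

lemma aug_diff_family: "aug n (\<lambda>k. vsub (\<phi> k) (\<psi> k)) a = vsub (aug n \<phi> a) (aug n \<psi> a)"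
  by (simp add: aug_def vsub_def fun_eq_iff algebra_simps sum_subtractf)

lemma vcong_aug: "rsubmod K \<Longrightarrow> (\<And>k. k < n \<Longrightarrow> vcong K (\<phi> k) (\<psi> k)) \<Longrightarrow> vcong K (aug n \<phi> a) (aug n \<psi> a)"
  unfolding vcong_def aug_diff_family[symmetric] by (rule rsubmod_aug) auto

lemma aug_vadd: "aug n h (vadd c1 c2) = vadd (aug n h c1) (aug n h c2)"
  by (simp add: aug_def vadd_def fun_eq_iff distrib_left sum.distrib)

lemma aug_vsmul: "aug n h (vsmul c a) = vsmul (aug n h c) a"
  by (simp add: aug_def vsmul_def fun_eq_iff sum_distrib_right mult.assoc)

lemma aug_vzero: "aug n h vzero = vzero"
  by (simp add: aug_def vzero_def)

lemma rsubmod_aug_preimage: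
  "rsubmod K \<Longrightarrow> rsubmod {c \<in> Fr n. aug n h c \<in> K}"
  using rsubmod_Fr[of n] unfolding rsubmod_def
  by (auto simp: aug_vadd aug_vsmul aug_vzero)

lemma codiff_eq_aug: "codiff m E \<psi> j = aug m \<psi> (\<lambda>k. E k j)"
  by (simp add: codiff_def aug_def)

lemma codiff_codiff:
  "codiff n E' (codiff m E \<alpha>) = codiff m (\<lambda>l j. \<Sum>k<n. E l k * E' k j) \<alpha>"
  by (simp add: codiff_def fun_eq_iff sum_distrib_left sum_distrib_right mult.assoc
      sum.swap[of _ "{..<n}"])

lemma codiff_diff_family:
  "codiff m E (\<lambda>k. vsub (\<phi> k) (\<psi> k)) j = vsub (codiff m E \<phi> j) (codiff m E \<psi> j)"
  by (simp add: codiff_eq_aug aug_diff_family)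

lemma vcong_codiff:
  "rsubmod K \<Longrightarrow> (\<And>k. k < m \<Longrightarrow> vcong K (\<phi> k) (\<psi> k)) \<Longrightarrow> vcong K (codiff m E \<phi> j) (codiff m E \<psi> j)"
  unfolding codiff_eq_aug by (rule vcong_aug)

lemma rsubmod_codiff: "rsubmod K \<Longrightarrow> (\<And>k. k < m \<Longrightarrow> \<phi> k \<in> K) \<Longrightarrow> codiff m E \<phi> j \<in> K"
  unfolding codiff_eq_aug by (rule rsubmod_aug)

lemma codiff_eq_vzero: "(\<And>l. l < m \<Longrightarrow> E l j = 0) \<Longrightarrow> codiff m E \<phi> j = vzero"
  by (simp add: codiff_def vzero_def fun_eq_iff)

subsection \<open>Lifted homomorphisms\<close>

lemma hom_lift_fst: "hom_lift M M' \<phi> \<Longrightarrow> v \<in> fst M \<Longrightarrow> \<phi> v \<in> fst M'"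
  by (simp add: hom_lift_def)

lemma hom_lift_snd: "hom_lift M M' \<phi> \<Longrightarrow> v \<in> snd M \<Longrightarrow> \<phi> v \<in> snd M'"
  by (simp add: hom_lift_def)

lemma hom_lift_vadd:
  "hom_lift M M' \<phi> \<Longrightarrow> u \<in> fst M \<Longrightarrow> v \<in> fst M \<Longrightarrow> vcong (snd M') (\<phi> (vadd u v)) (vadd (\<phi> u) (\<phi> v))"
  by (simp add: hom_lift_def vcong_def vsub_def vadd_def diff_diff_eq)

lemma hom_lift_vsmul:
  "hom_lift M M' \<phi> \<Longrightarrow> v \<in> fst M \<Longrightarrow> vcong (snd M') (\<phi> (vsmul v a)) (vsmul (\<phi> v) a)"
  by (simp add: hom_lift_def vcong_def)

context
  fixes M M' \<phi>
  assumes hom: "hom_lift M M' \<phi>" and valid: "sq_valid M" "sq_valid M'"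
begin

private lemma rsubmods: "rsubmod (fst M)" "rsubmod (snd M)" "rsubmod (snd M')"
  using valid by (simp_all add: sq_valid_def)

lemma hom_lift_vsub:
  assumes "u \<in> fst M" "v \<in> fst M"
  shows "vcong (snd M') (\<phi> (vsub u v)) (vsub (\<phi> u) (\<phi> v))"
proof -
  have "vsmul v (-1) \<in> fst M" using rsubmod_smul[OF rsubmods(1) assms(2)] .
  then have "vcong (snd M') (\<phi> (vsub u v)) (vadd (\<phi> u) (\<phi> (vsmul v (-1))))"
    unfolding vsub_eq_vadd_vsmul using hom_lift_vadd[OF hom assms(1)] by blast
  moreover have "vcong (snd M') (vadd (\<phi> u) (\<phi> (vsmul v (-1)))) (vadd (\<phi> u) (vsmul (\<phi> v) (-1)))"
    by (rule vcong_add[OF rsubmods(3) vcong_refl[OF rsubmods(3)] hom_lift_vsmul[OF hom assms(2)]])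
  ultimately show ?thesis
    unfolding vsub_eq_vadd_vsmul[of "\<phi> u"] using vcong_trans[OF rsubmods(3)] by blast
qed

lemma hom_lift_vcong:
  assumes "u \<in> fst M" "v \<in> fst M" "vcong (snd M) u v"
  shows "vcong (snd M') (\<phi> u) (\<phi> v)"
proof -
  have "vsub u v \<in> snd M" using assms(3) by (simp add: vcong_def)
  then have "\<phi> (vsub u v) \<in> snd M'" by (rule hom_lift_snd[OF hom])
  moreover have "vcong (snd M') (vsub (\<phi> u) (\<phi> v)) (\<phi> (vsub u v))"
    by (rule vcong_sym[OF rsubmods(3) hom_lift_vsub[OF assms(1,2)]])
  ultimately show ?thesis using vcong_mem[OF rsubmods(3)] by (simp add: vcong_def)
qed

lemma hom_lift_aug:
  "(\<And>k. k < n \<Longrightarrow> \<psi> k \<in> fst M) \<Longrightarrow> vcong (snd M') (\<phi> (aug n \<psi> a)) (aug n (\<lambda>k. \<phi> (\<psi> k)) a)"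
proof (induction n)
  case 0
  show ?case using hom_lift_snd[OF hom rsubmod_zero[OF rsubmods(2)]] by (simp add: vcong_vzero_iff)
next
  case (Suc n)
  have "aug n \<psi> a \<in> fst M" "vsmul (\<psi> n) (a n) \<in> fst M"
    using Suc.prems by (auto intro: rsubmod_aug rsubmod_smul rsubmods(1))
  then have "vcong (snd M') (\<phi> (aug (Suc n) \<psi> a)) (vadd (\<phi> (aug n \<psi> a)) (\<phi> (vsmul (\<psi> n) (a n))))"
    unfolding aug_Suc by (rule hom_lift_vadd[OF hom])
  moreover have "vcong (snd M') (vadd (\<phi> (aug n \<psi> a)) (\<phi> (vsmul (\<psi> n) (a n))))
      (aug (Suc n) (\<lambda>k. \<phi> (\<psi> k)) a)"
    unfolding aug_Suc using Suc by (intro vcong_add[OF rsubmods(3)] hom_lift_vsmul[OF hom]) auto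
  ultimately show ?case using vcong_trans[OF rsubmods(3)] by blast
qed

lemma hom_lift_codiff:
  "(\<And>k. k < m \<Longrightarrow> \<psi> k \<in> fst M) \<Longrightarrow> vcong (snd M') (\<phi> (codiff m E \<psi> j)) (codiff m E (\<lambda>k. \<phi> (\<psi> k)) j)"
  unfolding codiff_eq_aug by (rule hom_lift_aug)

end

subsection \<open>Cohomology of a complex\<close>

context
  fixes X :: "nat \<Rightarrow> 'a::ring_1 sq" and f
  assumes complex: "is_complex X f"
begin

lemma complex_valid: "sq_valid (X i)"
  and complex_rsubmods: "rsubmod (fst (X i))" "rsubmod (snd (X i))"
  and complex_hom_lift: "hom_lift (X i) (X (Suc i)) (f i)"
  using complex by (simp_all add: is_complex_def sq_valid_def)

lemma complex_snd_subset_fst: "snd (X i) \<subseteq> fst (X i)"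
  using complex_valid by (simp add: sq_valid_def)

lemma complex_comp: "v \<in> fst (X i) \<Longrightarrow> f (Suc i) (f i v) \<in> snd (X (Suc (Suc i)))"
  using complex by (simp add: is_complex_def)

lemma coboundaries_Suc_iff:
  "x \<in> coboundaries X f (Suc i) \<longleftrightarrow> (\<exists>u\<in>fst (X i). vcong (snd (X (Suc i))) x (f i u))"
proof
  assume "x \<in> coboundaries X f (Suc i)"
  then obtain u k where "u \<in> fst (X i)" "k \<in> snd (X (Suc i))" "x = vadd (f i u) k"
    by (auto simp: coboundaries_def)
  moreover have "vsub (vadd (f i u) k) (f i u) = k"
    by (simp add: vsub_def vadd_def)
  ultimately show "\<exists>u\<in>fst (X i). vcong (snd (X (Suc i))) x (f i u)"
    by (intro bexI[of _ u]) (simp_all add: vcong_def)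
next
  assume "\<exists>u\<in>fst (X i). vcong (snd (X (Suc i))) x (f i u)"
  then obtain u where "u \<in> fst (X i)" "vsub x (f i u) \<in> snd (X (Suc i))"
    by (auto simp: vcong_def)
  moreover have "x = vadd (f i u) (vsub x (f i u))"
    by (simp add: vsub_def vadd_def)
  ultimately show "x \<in> coboundaries X f (Suc i)" by (auto simp: coboundaries_def)
qed

lemma image_in_coboundaries: "u \<in> fst (X i) \<Longrightarrow> f i u \<in> coboundaries X f (Suc i)"
  using coboundaries_Suc_iff[of "f i u" i] vcong_refl[OF complex_rsubmods(2)] by blast

lemma rsubmod_cocycles: "rsubmod (cocycles X f i)"
proof -
  note F = complex_rsubmods(1)[of i] and K = complex_rsubmods(2)[of "Suc i"]
  note h = complex_hom_lift[of i]
  have "cocycles X f i \<subseteq> fvec" using F by (auto simp: cocycles_def rsubmod_def)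
  moreover have "vzero \<in> cocycles X f i"
    using rsubmod_zero[OF F] hom_lift_snd[OF h rsubmod_zero[OF complex_rsubmods(2)]]
    by (simp add: cocycles_def)
  moreover have "vadd u v \<in> cocycles X f i" if "u \<in> cocycles X f i" "v \<in> cocycles X f i" for u v
  proof -
    have u: "u \<in> fst (X i)" "f i u \<in> snd (X (Suc i))" and v: "v \<in> fst (X i)" "f i v \<in> snd (X (Suc i))"
      using that by (auto simp: cocycles_def)
    show ?thesis
      using vcong_mem[OF K hom_lift_vadd[OF h u(1) v(1)] rsubmod_add[OF K u(2) v(2)]]
        rsubmod_add[OF F u(1) v(1)] by (simp add: cocycles_def)
  qed
  moreover have "vsmul v a \<in> cocycles X f i" if "v \<in> cocycles X f i" for v a
  proof -
    have v: "v \<in> fst (X i)" "f i v \<in> snd (X (Suc i))"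
      using that by (auto simp: cocycles_def)
    show ?thesis
      using vcong_mem[OF K hom_lift_vsmul[OF h v(1)] rsubmod_smul[OF K v(2)]]
        rsubmod_smul[OF F v(1)] by (simp add: cocycles_def)
  qed
  ultimately show ?thesis unfolding rsubmod_def by blast
qed

lemma rsubmod_coboundaries: "rsubmod (coboundaries X f i)"
proof (cases i)
  case 0
  then show ?thesis using complex_rsubmods(2) by (simp add: coboundaries_def)
next
  case (Suc i')
  note F = complex_rsubmods(1)[of i'] and K = complex_rsubmods(2)[of "Suc i'"]
  note h = complex_hom_lift[of i']
  note cob = coboundaries_Suc_iff[of _ i']
  have "x \<in> fst (X (Suc i'))" if x: "x \<in> coboundaries X f (Suc i')" for x
  proof -
    obtain u where u: "u \<in> fst (X i')" "vcong (snd (X (Suc i'))) x (f i' u)"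
      using x cob[of x] by blast
    show ?thesis by (rule sq_valid_vcong_mem_fst[OF complex_valid u(2) hom_lift_fst[OF h u(1)]])
  qed
  then have "coboundaries X f (Suc i') \<subseteq> fvec"
    using complex_rsubmods(1)[of "Suc i'"] by (auto simp: rsubmod_def)
  moreover have "vzero \<in> coboundaries X f (Suc i')"
  proof -
    have "f i' vzero \<in> snd (X (Suc i'))"
      using hom_lift_snd[OF h rsubmod_zero[OF complex_rsubmods(2)]] .
    then have "vcong (snd (X (Suc i'))) vzero (f i' vzero)"
      unfolding vcong_def by (rule rsubmod_diff[OF K rsubmod_zero[OF K]])
    then show ?thesis using cob[of vzero] rsubmod_zero[OF F] by blast
  qed
  moreover have "vadd u v \<in> coboundaries X f (Suc i')"
    if uv: "u \<in> coboundaries X f (Suc i')" "v \<in> coboundaries X f (Suc i')" for u v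
  proof -
    obtain a b where ab: "a \<in> fst (X i')" "b \<in> fst (X i')" "vcong (snd (X (Suc i'))) u (f i' a)"
      "vcong (snd (X (Suc i'))) v (f i' b)" using uv cob[of u] cob[of v] by meson
    have "vcong (snd (X (Suc i'))) (vadd u v) (vadd (f i' a) (f i' b))"
      using vcong_add[OF K ab(3,4)] .
    moreover have "vcong (snd (X (Suc i'))) (vadd (f i' a) (f i' b)) (f i' (vadd a b))"
      using vcong_sym[OF K hom_lift_vadd[OF h ab(1,2)]] .
    ultimately have "vcong (snd (X (Suc i'))) (vadd u v) (f i' (vadd a b))"
      by (rule vcong_trans[OF K])
    then show ?thesis using cob[of "vadd u v"] rsubmod_add[OF F ab(1,2)] by blast
  qed
  moreover have "vsmul v c \<in> coboundaries X f (Suc i')"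
    if v: "v \<in> coboundaries X f (Suc i')" for v c
  proof -
    obtain b where b: "b \<in> fst (X i')" "vcong (snd (X (Suc i'))) v (f i' b)"
      using v cob[of v] by meson
    have "vcong (snd (X (Suc i'))) (vsmul v c) (vsmul (f i' b) c)"
      using vcong_smul[OF K b(2)] .
    moreover have "vcong (snd (X (Suc i'))) (vsmul (f i' b) c) (f i' (vsmul b c))"
      using vcong_sym[OF K hom_lift_vsmul[OF h b(1)]] .
    ultimately have "vcong (snd (X (Suc i'))) (vsmul v c) (f i' (vsmul b c))"
      by (rule vcong_trans[OF K])
    then show ?thesis using cob[of "vsmul v c"] rsubmod_smul[OF F b(1)] by blast
  qed
  ultimately show ?thesis unfolding rsubmod_def Suc by auto
qed

lemma snd_subset_coboundaries: "snd (X i) \<subseteq> coboundaries X f i"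
proof (cases i)
  case 0
  then show ?thesis by (simp add: coboundaries_def)
next
  case (Suc i')
  have "x \<in> coboundaries X f (Suc i')" if "x \<in> snd (X (Suc i'))" for x
  proof -
    have "vcong (snd (X (Suc i'))) x (f i' vzero)"
      unfolding vcong_def by (rule rsubmod_diff[OF complex_rsubmods(2) that
        hom_lift_snd[OF complex_hom_lift rsubmod_zero[OF complex_rsubmods(2)]]])
    then show ?thesis using coboundaries_Suc_iff[of x i'] rsubmod_zero[OF complex_rsubmods(1)[of i']] by blast
  qed
  then show ?thesis using Suc by blast
qed

lemma coboundaries_subset_cocycles: "coboundaries X f i \<subseteq> cocycles X f i"
proof (cases i)
  case 0
  then show ?thesis
    using complex_snd_subset_fst hom_lift_snd[OF complex_hom_lift]
    by (auto simp: coboundaries_def cocycles_def)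
next
  case (Suc i')
  have "x \<in> cocycles X f (Suc i')" if x: "x \<in> coboundaries X f (Suc i')" for x
  proof -
    obtain u where u: "u \<in> fst (X i')" "vcong (snd (X (Suc i'))) x (f i' u)"
      using x coboundaries_Suc_iff[of x i'] by blast
    have fu: "f i' u \<in> fst (X (Suc i'))" using hom_lift_fst[OF complex_hom_lift u(1)] .
    have x: "x \<in> fst (X (Suc i'))" using sq_valid_vcong_mem_fst[OF complex_valid u(2) fu] .
    have "vcong (snd (X (Suc (Suc i')))) (f (Suc i') x) (f (Suc i') (f i' u))"
      by (rule hom_lift_vcong[OF complex_hom_lift complex_valid complex_valid x fu u(2)])
    then have "f (Suc i') x \<in> snd (X (Suc (Suc i')))"
      using vcong_mem[OF complex_rsubmods(2)] complex_comp[OF u(1)] by blast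
    then show ?thesis using x by (simp add: cocycles_def)
  qed
  then show ?thesis using Suc by blast
qed

lemma sq_valid_cohom: "sq_valid (cohom X f i)"
  using rsubmod_cocycles coboundaries_subset_cocycles rsubmod_coboundaries
  by (simp add: sq_valid_def cohom_def)

end

subsection \<open>Finite generation over a noetherian ring\<close>

lemma rsubmod_lincomb:
  assumes "rsubmod K" "finite G" "G \<subseteq> K"
  shows "lincomb G c \<in> K"
  using assms(2,3)
proof (induction G rule: finite_induct)
  case empty
  then show ?case using rsubmod_zero[OF assms(1)] by (simp add: lincomb_def vzero_def)
next
  case (insert x F)
  then have "lincomb (insert x F) c = vadd (vsmul x (c x)) (lincomb F c)"
    by (simp add: lincomb_def vadd_def vsmul_def fun_eq_iff)
  then show ?case using insert rsubmod_add[OF assms(1)] rsubmod_smul[OF assms(1)] by simp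
qed

lemma lincomb_image:
  assumes "finite C"
  shows "\<exists>c'. (\<lambda>i. \<Sum>x\<in>C. F x i * e x) = lincomb (F ` C) c'"
proof
  show "(\<lambda>i. \<Sum>x\<in>C. F x i * e x) = lincomb (F ` C) (\<lambda>y. \<Sum>x\<in>{x\<in>C. F x = y}. e x)"
  proof
    fix i
    have "(\<Sum>x\<in>C. F x i * e x) = (\<Sum>y\<in>F ` C. \<Sum>x\<in>{x\<in>C. F x = y}. F x i * e x)"
      by (rule sum.image_gen[OF assms])
    also have "\<dots> = (\<Sum>y\<in>F ` C. y i * (\<Sum>x\<in>{x\<in>C. F x = y}. e x))"
      by (rule sum.cong) (auto simp: sum_distrib_left)
    finally show "(\<Sum>x\<in>C. F x i * e x) = lincomb (F ` C) (\<lambda>y. \<Sum>x\<in>{x\<in>C. F x = y}. e x) i"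
      by (simp add: lincomb_def)
  qed
qed

lemma lincomb_extend:
  assumes "finite B" "A \<subseteq> B"
  shows "lincomb A c = lincomb B (\<lambda>x. if x \<in> A then c x else 0)"
proof
  fix i
  have "(\<Sum>x\<in>B. x i * (if x \<in> A then c x else 0)) = (\<Sum>x\<in>B. if x \<in> A then x i * c x else 0)"
    by (rule sum.cong) auto
  also have "\<dots> = (\<Sum>x\<in>B \<inter> A. x i * c x)"
    by (rule sum.inter_restrict[OF assms(1), symmetric])
  finally show "lincomb A c i = lincomb B (\<lambda>x. if x \<in> A then c x else 0) i"
    using assms(2) by (simp add: lincomb_def Int_absorb1)
qed

lemma vadd_lincomb_Un:
  assumes "finite A" "finite B"
  shows "\<exists>c. vadd (lincomb A c1) (lincomb B c2) = lincomb (A \<union> B) c"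
proof -
  have "vadd (lincomb A c1) (lincomb B c2) =
      lincomb (A \<union> B) (\<lambda>x. (if x \<in> A then c1 x else 0) + (if x \<in> B then c2 x else 0))"
    using assms
    by (simp add: lincomb_extend[of "A \<union> B" A] lincomb_extend[of "A \<union> B" B])
      (simp add: lincomb_def vadd_def fun_eq_iff sum.distrib distrib_left)
  then show ?thesis by blast
qed

lemma lincomb_reindex:
  assumes "bij_betw h {..<p} G"
  shows "lincomb G c = aug p h (\<lambda>l. c (h l))"
proof
  fix i
  show "lincomb G c i = aug p h (\<lambda>l. c (h l)) i"
    using sum.reindex_bij_betw[OF assms, of "\<lambda>x. x i * c x"] by (simp add: lincomb_def aug_def)
qed

lemma aug_lincomb: "aug n h (lincomb C e) = (\<lambda>i. \<Sum>x\<in>C. aug n h x i * e x)"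
  by (simp add: aug_def lincomb_def fun_eq_iff sum_distrib_left sum_distrib_right mult.assoc
      sum.swap[of _ "{..<n}"])

lemma sq_fg_imp_aug_onto:
  assumes "sq_fg S"
  obtains n h where "\<And>k. k < n \<Longrightarrow> h k \<in> fst S"
    and "\<And>v. v \<in> fst S \<Longrightarrow> \<exists>c\<in>Fr n. vsub v (aug n h c) \<in> snd S"
proof -
  obtain G where G: "finite G" "G \<subseteq> fst S" "\<forall>v\<in>fst S. \<exists>c. vsub v (lincomb G c) \<in> snd S"
    using assms by (auto simp: sq_fg_def)
  obtain h where h: "bij_betw h {..<card G} G"
    using ex_bij_betw_nat_finite[OF G(1)] by (auto simp: atLeast0LessThan)
  have "h k \<in> fst S" if "k < card G" for k
    using bij_betwE[OF h] that G(2) by blast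
  moreover have "\<exists>c\<in>Fr (card G). vsub v (aug (card G) h c) \<in> snd S" if v: "v \<in> fst S" for v
  proof -
    obtain c where c: "vsub v (lincomb G c) \<in> snd S" using G(3) v by blast
    define c' where "c' l = (if l < card G then c (h l) else 0)" for l
    have "lincomb G c = aug (card G) h c'"
      unfolding lincomb_reindex[OF h] by (rule aug_cong) (simp_all add: c'_def)
    moreover have "c' \<in> Fr (card G)" by (simp add: c'_def Fr_def)
    ultimately show ?thesis using c by (intro bexI[of _ c']) simp_all
  qed
  ultimately show ?thesis by (rule that)
qed

lemma noetherian_coordinate_generators:
  fixes K :: "'a::ring_1 vec set"
  assumes noeth: "noetherian_ring TYPE('a)" and K: "rsubmod K"
  shows "\<exists>W. finite W \<and> W \<subseteq> K \<and> (\<forall>v\<in>K. \<exists>c. v n = lincomb W c n)"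
proof -
  define I where "I = (\<lambda>v. v n) ` K"
  have "0 \<in> I"
    using image_eqI[of 0 "\<lambda>v. v n" vzero K] rsubmod_zero[OF K] by (simp add: I_def vzero_def)
  moreover have "\<forall>x\<in>I. \<forall>y\<in>I. x + y \<in> I"
  proof (intro ballI)
    fix x y assume "x \<in> I" "y \<in> I"
    then obtain u v where "u \<in> K" "v \<in> K" "x = u n" "y = v n" by (auto simp: I_def)
    then show "x + y \<in> I"
      using image_eqI[of "x + y" "\<lambda>v. v n" "vadd u v" K] rsubmod_add[OF K]
      by (simp add: I_def vadd_def)
  qed
  moreover have "\<forall>x\<in>I. \<forall>a. x * a \<in> I"
  proof (intro ballI allI)
    fix x a assume "x \<in> I"
    then obtain u where "u \<in> K" "x = u n" by (auto simp: I_def)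
    then show "x * a \<in> I"
      using image_eqI[of "x * a" "\<lambda>v. v n" "vsmul u a" K] rsubmod_smul[OF K]
      by (simp add: I_def vsmul_def)
  qed
  ultimately obtain G0 where G0: "finite G0" "G0 \<subseteq> I" "I = {\<Sum>g\<in>G0. g * c g | c. True}"
    using noeth unfolding noetherian_ring_def by blast
  define w where "w g = (SOME v. v \<in> K \<and> v n = g)" for g
  have w: "w g \<in> K \<and> w g n = g" if "g \<in> G0" for g
  proof -
    have "\<exists>v. v \<in> K \<and> v n = g" using that G0(2) by (auto simp: I_def)
    then show ?thesis unfolding w_def by (rule someI_ex)
  qed
  have span: "\<exists>c. v n = lincomb (w ` G0) c n" if v: "v \<in> K" for v
  proof -
    have "v n \<in> I" using v by (simp add: I_def)
    then obtain c where c: "v n = (\<Sum>g\<in>G0. g * c g)" using G0(3) by blast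
    obtain c' where c': "(\<lambda>i. \<Sum>g\<in>G0. w g i * c g) = lincomb (w ` G0) c'"
      using lincomb_image[OF G0(1)] by blast
    have "v n = (\<Sum>g\<in>G0. w g n * c g)"
      unfolding c by (rule sum.cong) (simp_all add: w)
    also have "\<dots> = lincomb (w ` G0) c' n" by (simp add: c'[symmetric])
    finally show ?thesis by blast
  qed
  have "w ` G0 \<subseteq> K" using w by blast
  with span show ?thesis by (intro exI[of _ "w ` G0"] conjI finite_imageI[OF G0(1)]) auto
qed
lemma noetherian_submodule_Fr_fg:
  fixes K :: "'a::ring_1 vec set"
  assumes noeth: "noetherian_ring TYPE('a)"
  shows "rsubmod K \<Longrightarrow> K \<subseteq> Fr n \<Longrightarrow> \<exists>G. finite G \<and> G \<subseteq> K \<and> (\<forall>v\<in>K. \<exists>c. v = lincomb G c)"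
proof (induction n arbitrary: K)
  case 0
  then have "K \<subseteq> {vzero}" by (auto simp: Fr_def vzero_def)
  then show ?case by (intro exI[of _ "{}"]) (auto simp: lincomb_def vzero_def)
next
  case (Suc n)
  obtain W where W: "finite W" "W \<subseteq> K" "\<forall>v\<in>K. \<exists>c. v n = lincomb W c n"
    using noetherian_coordinate_generators[OF noeth Suc.prems(1), of n] by (elim exE conjE)
  obtain G where G: "finite G" "G \<subseteq> K \<inter> Fr n" "\<forall>v\<in>K \<inter> Fr n. \<exists>c. v = lincomb G c"
    using Suc.IH[OF rsubmod_Int[OF Suc.prems(1) rsubmod_Fr] Int_lower2] by (elim exE conjE)
  have span: "\<exists>c. v = lincomb (G \<union> W) c" if v: "v \<in> K" for v
  proof -
    obtain c where c: "v n = lincomb W c n" using bspec[OF W(3) v] by (elim exE)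
    have u: "lincomb W c \<in> K" by (rule rsubmod_lincomb[OF Suc.prems(1) W(1,2)])
    have Fr: "v \<in> Fr (Suc n)" "lincomb W c \<in> Fr (Suc n)" using v u Suc.prems(2) by blast+
    have "vsub v (lincomb W c) i = 0" if "n \<le> i" for i
    proof (cases "i = n")
      case True
      then show ?thesis using c by (simp add: vsub_def)
    next
      case False
      then show ?thesis using that Fr by (simp add: Fr_def vsub_def)
    qed
    then have "vsub v (lincomb W c) \<in> Fr n" by (simp add: Fr_def)
    moreover have "vsub v (lincomb W c) \<in> K" by (rule rsubmod_diff[OF Suc.prems(1) v u])
    ultimately have "vsub v (lincomb W c) \<in> K \<inter> Fr n" by blast
    from bspec[OF G(3) this] obtain c1 where c1: "vsub v (lincomb W c) = lincomb G c1"
      by (elim exE)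
    obtain c2 where "vadd (lincomb G c1) (lincomb W c) = lincomb (G \<union> W) c2"
      using vadd_lincomb_Un[OF G(1) W(1), of c1 c] by (elim exE)
    moreover have "v = vadd (vsub v (lincomb W c)) (lincomb W c)"
      by (simp add: vsub_def vadd_def)
    ultimately have "v = lincomb (G \<union> W) c2" using c1 by simp
    then show ?thesis by (rule exI[of _ c2])
  qed
  have "G \<union> W \<subseteq> K" using G(2) W(2) by blast
  then show ?case using G(1) W(1) by (intro exI[of _ "G \<union> W"]) (simp add: span)
qed

lemma mv_Fr: "mv m n E c \<in> Fr m"
  by (simp add: mv_def Fr_def)

lemma mv_eq_aug: "(\<And>l. l < p \<Longrightarrow> (\<lambda>k. B k l) \<in> Fr n) \<Longrightarrow> mv n p B c = aug p (\<lambda>l k. B k l) c"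
  by (auto simp: mv_def aug_def fun_eq_iff Fr_def)

lemma noetherian_submodule_Fr_image:
  fixes K :: "'a::ring_1 vec set"
  assumes noeth: "noetherian_ring TYPE('a)" and K: "rsubmod K" "K \<subseteq> Fr n"
  shows "\<exists>p B. \<forall>c. c \<in> K \<longleftrightarrow> (\<exists>b\<in>Fr p. c = mv n p B b)"
proof -
  obtain G where G: "finite G" "G \<subseteq> K" "\<forall>v\<in>K. \<exists>c. v = lincomb G c"
    using noetherian_submodule_Fr_fg[OF noeth K] by blast
  obtain h where h: "bij_betw h {..<card G} G"
    using ex_bij_betw_nat_finite[OF G(1)] by (auto simp: atLeast0LessThan)
  define p where "p = card G"
  define B where "B k l = h l k" for k l
  have cols: "(\<lambda>k. B k l) \<in> K" if "l < p" for l
    using h that G(2) by (auto simp: B_def p_def bij_betw_def)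
  then have mv_B: "mv n p B c = aug p h c" for c
    using K(2) by (subst mv_eq_aug) (auto simp: B_def)
  have "c \<in> K \<longleftrightarrow> (\<exists>b\<in>Fr p. c = mv n p B b)" for c
  proof
    assume "c \<in> K"
    then obtain e where e: "c = lincomb G e" using G(3) by blast
    define b where "b l = (if l < p then e (h l) else 0)" for l
    have "c = mv n p B b"
      unfolding e mv_B lincomb_reindex[OF h[folded p_def]] by (rule aug_cong) (auto simp: b_def)
    moreover have "b \<in> Fr p" by (simp add: b_def Fr_def)
    ultimately show "\<exists>b\<in>Fr p. c = mv n p B b" by blast
  next
    assume "\<exists>b\<in>Fr p. c = mv n p B b"
    then show "c \<in> K" using rsubmod_aug[OF K(1) cols] mv_B by (auto simp: B_def)
  qed
  then show ?thesis by blast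
qed

lemma mv_vadd: "mv n p B (vadd c1 c2) = vadd (mv n p B c1) (mv n p B c2)"
  by (simp add: mv_def vadd_def fun_eq_iff distrib_left sum.distrib)

lemma mv_vsmul: "mv n p B (vsmul c a) = vsmul (mv n p B c) a"
  by (simp add: mv_def vsmul_def fun_eq_iff sum_distrib_right mult.assoc)

lemma mv_vzero: "mv n p B vzero = vzero"
  by (simp add: mv_def vzero_def fun_eq_iff)

lemma rsubmod_mv_kernel: "rsubmod {c \<in> Fr p. mv n p B c = vzero}"
proof -
  have "vadd vzero vzero = (vzero :: 'a::ring_1 vec)" "vsmul vzero a = (vzero :: 'a vec)" for a
    by (simp_all add: vadd_def vsmul_def vzero_def)
  then show ?thesis
    using rsubmod_Fr[of p] unfolding rsubmod_def by (auto simp: mv_vadd mv_vsmul mv_vzero)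
qed

lemma noetherian_syzygy_chain:
  fixes K :: "'a::ring_1 vec set"
  assumes noeth: "noetherian_ring TYPE('a)" and K: "rsubmod K" "K \<subseteq> Fr n"
  obtains r D where "r 0 = n"
    and "\<And>c. c \<in> K \<longleftrightarrow> (\<exists>b\<in>Fr (r 1). c = mv (r 0) (r 1) (D 0) b)"
    and "\<And>i c. mv (r i) (r (Suc i)) (D i) c = vzero \<and> c \<in> Fr (r (Suc i)) \<longleftrightarrow>
           (\<exists>b\<in>Fr (r (Suc (Suc i))). c = mv (r (Suc i)) (r (Suc (Suc i))) (D (Suc i)) b)"
proof -
  let ?presents = "\<lambda>(n', K') (p, B). rsubmod K' \<and> K' \<subseteq> Fr n' \<longrightarrow>
      (\<forall>c. c \<in> K' \<longleftrightarrow> (\<exists>b\<in>Fr p. c = mv n' p B b))"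
  have "\<forall>nK :: nat \<times> 'a vec set. \<exists>pB. ?presents nK pB"
  proof
    fix nK :: "nat \<times> 'a vec set"
    obtain n' K' where nK: "nK = (n', K')" by fastforce
    show "\<exists>pB. ?presents nK pB"
    proof (cases "rsubmod K' \<and> K' \<subseteq> Fr n'")
      case True
      from noetherian_submodule_Fr_image[OF noeth conjunct1[OF True] conjunct2[OF True]]
      obtain p B where "\<forall>c. c \<in> K' \<longleftrightarrow> (\<exists>b\<in>Fr p. c = mv n' p B b)" by (elim exE)
      then show ?thesis unfolding nK by (intro exI[of _ "(p, B)"]) simp
    next
      case False
      then show ?thesis unfolding nK by (intro exI[of _ "(0, \<lambda>_ _. 0)"]) auto
    qed
  qed
  from choice[OF this] obtain sel :: "nat \<times> 'a vec set \<Rightarrow> nat \<times> (nat \<Rightarrow> nat \<Rightarrow> 'a)"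
    where sel: "\<forall>nK. ?presents nK (sel nK)" by (elim exE)
  define step :: "nat \<times> 'a vec set \<Rightarrow> nat \<times> 'a vec set" where
    "step nK = (fst (sel nK), {c \<in> Fr (fst (sel nK)). mv (fst nK) (fst (sel nK)) (snd (sel nK)) c = vzero})"
    for nK
  define r where "r i = fst ((step ^^ i) (n, K))" for i
  define Ks where "Ks i = snd ((step ^^ i) (n, K))" for i
  define D where "D i = snd (sel ((step ^^ i) (n, K)))" for i
  have chain: "(step ^^ i) (n, K) = (r i, Ks i)" for i
    by (simp add: r_def Ks_def)
  have r_Suc: "r (Suc i) = fst (sel (r i, Ks i))" for i
    using chain[of i] by (simp add: r_def step_def)
  have D: "D i = snd (sel (r i, Ks i))" for i
    using chain[of i] by (simp add: D_def)
  have Ks_Suc: "Ks (Suc i) = {c \<in> Fr (r (Suc i)). mv (r i) (r (Suc i)) (D i) c = vzero}" for i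
    by (simp add: Ks_def step_def r_def D_def)
  have inv: "rsubmod (Ks i) \<and> Ks i \<subseteq> Fr (r i)" for i
  proof (cases i)
    case 0
    then show ?thesis using K by (simp add: r_def Ks_def)
  next
    case (Suc i')
    have "rsubmod (Ks (Suc i'))" unfolding Ks_Suc by (rule rsubmod_mv_kernel)
    moreover have "Ks (Suc i') \<subseteq> Fr (r (Suc i'))" unfolding Ks_Suc by blast
    ultimately show ?thesis using Suc by simp
  qed
  have image: "c \<in> Ks i \<longleftrightarrow> (\<exists>b\<in>Fr (r (Suc i)). c = mv (r i) (r (Suc i)) (D i) b)" for i c
  proof -
    from sel have "?presents (r i, Ks i) (sel (r i, Ks i))" by (rule spec)
    then show ?thesis using inv[of i] unfolding r_Suc D by (simp add: case_prod_beta)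
  qed
  show ?thesis
  proof
    show "r 0 = n" by (simp add: r_def)
    show "c \<in> K \<longleftrightarrow> (\<exists>b\<in>Fr (r 1). c = mv (r 0) (r 1) (D 0) b)" for c
      using image[of c 0] by (simp add: Ks_def)
    show "mv (r i) (r (Suc i)) (D i) c = vzero \<and> c \<in> Fr (r (Suc i)) \<longleftrightarrow>
        (\<exists>b\<in>Fr (r (Suc (Suc i))). c = mv (r (Suc i)) (r (Suc (Suc i))) (D (Suc i)) b)" for i c
      using image[of c "Suc i"] by (auto simp: Ks_Suc)
  qed
qed
lemma noetherian_free_res_exists:
  fixes S :: "'a::ring_1 sq"
  assumes noeth: "noetherian_ring TYPE('a)" and S: "sq_valid S" "sq_fg S"
  obtains r g D where "free_res S r g D"
proof -
  obtain n h where gen: "\<And>k. k < n \<Longrightarrow> h k \<in> fst S"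
    and onto: "\<And>v. v \<in> fst S \<Longrightarrow> \<exists>c\<in>Fr n. vsub v (aug n h c) \<in> snd S"
    using sq_fg_imp_aug_onto[OF S(2)] by blast
  define K0 where "K0 = {c \<in> Fr n. aug n h c \<in> snd S}"
  have K0: "rsubmod K0" "K0 \<subseteq> Fr n"
    using rsubmod_aug_preimage[of "snd S" n h] S(1) by (auto simp: K0_def sq_valid_def)
  obtain r D where r0: "r 0 = n"
    and im0: "\<And>c. c \<in> K0 \<longleftrightarrow> (\<exists>b\<in>Fr (r 1). c = mv (r 0) (r 1) (D 0) b)"
    and exact: "\<And>i c. mv (r i) (r (Suc i)) (D i) c = vzero \<and> c \<in> Fr (r (Suc i)) \<longleftrightarrow>
        (\<exists>b\<in>Fr (r (Suc (Suc i))). c = mv (r (Suc i)) (r (Suc (Suc i))) (D (Suc i)) b)"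
    using noetherian_syzygy_chain[OF noeth K0] by metis
  have "free_res S r h D"
    unfolding free_res_def r0
  proof (intro conjI allI ballI)
    show "k < n \<longrightarrow> h k \<in> fst S" for k using gen by blast
    show "\<exists>c\<in>Fr n. vsub v (aug n h c) \<in> snd S" if "v \<in> fst S" for v
      by (rule onto[OF that])
    show "aug n h c \<in> snd S \<longleftrightarrow> (\<exists>b\<in>Fr (r 1). c = mv n (r 1) (D 0) b)" if "c \<in> Fr n" for c
      using im0[of c] that by (simp add: K0_def r0)
    show "mv (r i) (r (Suc i)) (D i) c = vzero \<longleftrightarrow>
        (\<exists>b\<in>Fr (r (Suc (Suc i))). c = mv (r (Suc i)) (r (Suc (Suc i))) (D (Suc i)) b)"
      if "c \<in> Fr (r (Suc i))" for i c
      using exact[of i c] that by simp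
  qed
  then show ?thesis by (rule that)
qed

lemma noetherian_sq_fg_subquotient:
  fixes N :: "'a::ring_1 vec set"
  assumes noeth: "noetherian_ring TYPE('a)" and fg: "sq_fg (N, K)"
    and L: "rsubmod L" and sub: "K \<subseteq> K'" "K' \<subseteq> L" "L \<subseteq> N"
  shows "sq_fg (L, K')"
proof -
  obtain n h where onto: "\<And>v. v \<in> N \<Longrightarrow> \<exists>c\<in>Fr n. vsub v (aug n h c) \<in> K"
    using sq_fg_imp_aug_onto[OF fg] by (metis fst_conv snd_conv)
  define P where "P = {c \<in> Fr n. aug n h c \<in> L}"
  have "rsubmod P" "P \<subseteq> Fr n" using rsubmod_aug_preimage[OF L] by (auto simp: P_def)
  from noetherian_submodule_Fr_fg[OF noeth this]
  obtain C where C: "finite C" "C \<subseteq> P" "\<forall>c\<in>P. \<exists>e. c = lincomb C e" by (elim exE conjE)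
  have span: "\<exists>e. vsub v (lincomb (aug n h ` C) e) \<in> K'" if v: "v \<in> L" for v
  proof -
    obtain c where c: "c \<in> Fr n" "vsub v (aug n h c) \<in> K"
      using onto[of v] v sub(3) by blast
    have "vcong L v (aug n h c)" using c(2) sub(1,2) by (auto simp: vcong_def)
    then have "aug n h c \<in> L" using vcong_mem[OF L vcong_sym[OF L]] v by blast
    then have "c \<in> P" using c(1) by (simp add: P_def)
    from bspec[OF C(3) this] obtain e where "c = lincomb C e" by (elim exE)
    then have "aug n h c = (\<lambda>i. \<Sum>x\<in>C. aug n h x i * e x)" by (simp add: aug_lincomb)
    moreover obtain e' where "(\<lambda>i. \<Sum>x\<in>C. aug n h x i * e x) = lincomb (aug n h ` C) e'"
      using lincomb_image[OF C(1), of "aug n h" e] by (elim exE)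
    ultimately have "vsub v (lincomb (aug n h ` C) e') \<in> K'" using c(2) sub(1) by auto
    then show ?thesis by (rule exI[of _ e'])
  qed
  have "aug n h ` C \<subseteq> L" using C(2) by (auto simp: P_def)
  then show ?thesis using C(1) span unfolding sq_fg_def
    by (intro exI[of _ "aug n h ` C"]) simp
qed
lemma noetherian_sq_fg_cohom:
  fixes X :: "nat \<Rightarrow> 'a::ring_1 sq"
  assumes noeth: "noetherian_ring TYPE('a)" and X: "is_complex X f"
  shows "sq_fg (cohom X f i)"
proof -
  have "sq_fg (fst (X i), snd (X i))" using X by (simp add: is_complex_def)
  then show ?thesis
    unfolding cohom_def
    by (rule noetherian_sq_fg_subquotient[OF noeth _ rsubmod_cocycles[OF X] snd_subset_coboundaries[OF X]
          coboundaries_subset_cocycles[OF X]]) (auto simp: cocycles_def)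
qed

subsection \<open>Free resolutions and Ext\<close>

lemma unit_vec_Fr: "j < n \<Longrightarrow> (\<lambda>k. if k = j then (1::'a::ring_1) else 0) \<in> Fr n"
  by (simp add: Fr_def)

lemma mv_unit_vec:
  assumes "j < n" "k < m"
  shows "mv m n E (\<lambda>k. if k = j then (1::'a::ring_1) else 0) k = E k j"
proof -
  have "(\<Sum>l<n. E k l * (if l = j then 1 else 0)) = (\<Sum>l<n. if l = j then E k l else 0)"
    by (rule sum.cong) auto
  then show ?thesis using assms by (simp add: mv_def)
qed

context
  fixes S :: "'a::ring_1 sq" and r g D
  assumes res: "free_res S r g D"
begin

lemma free_res_gen: "k < r 0 \<Longrightarrow> g k \<in> fst S"
  using res by (simp add: free_res_def)

lemma free_res_onto: "v \<in> fst S \<Longrightarrow> \<exists>c\<in>Fr (r 0). vsub v (aug (r 0) g c) \<in> snd S"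
  using res by (simp add: free_res_def)

lemma free_res_exact_0:
  "c \<in> Fr (r 0) \<Longrightarrow> aug (r 0) g c \<in> snd S \<longleftrightarrow> (\<exists>b\<in>Fr (r 1). c = mv (r 0) (r 1) (D 0) b)"
  using res unfolding free_res_def by blast

lemma free_res_exact_Suc:
  "c \<in> Fr (r (Suc i)) \<Longrightarrow> mv (r i) (r (Suc i)) (D i) c = vzero \<longleftrightarrow>
     (\<exists>b\<in>Fr (r (Suc (Suc i))). c = mv (r (Suc i)) (r (Suc (Suc i))) (D (Suc i)) b)"
  using res unfolding free_res_def by blast

lemma free_res_codiff_0: "j < r 1 \<Longrightarrow> codiff (r 0) (D 0) g j \<in> snd S"
proof -
  assume j: "j < r 1"
  let ?e = "\<lambda>k. if k = j then (1::'a) else 0"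
  have "aug (r 0) g (mv (r 0) (r 1) (D 0) ?e) \<in> snd S"
    using free_res_exact_0[OF mv_Fr] unit_vec_Fr[OF j] by blast
  moreover have "aug (r 0) g (mv (r 0) (r 1) (D 0) ?e) = codiff (r 0) (D 0) g j"
    unfolding codiff_eq_aug by (intro aug_cong refl mv_unit_vec[OF j])
  ultimately show ?thesis by simp
qed

lemma free_res_D_D:
  assumes "l < r i" "j < r (Suc (Suc i))"
  shows "(\<Sum>k<r (Suc i). D i l k * D (Suc i) k j) = 0"
proof -
  let ?e = "\<lambda>k. if k = j then (1::'a) else 0"
  let ?c = "mv (r (Suc i)) (r (Suc (Suc i))) (D (Suc i)) ?e"
  have "mv (r i) (r (Suc i)) (D i) ?c = vzero"
    using free_res_exact_Suc[OF mv_Fr] unit_vec_Fr[OF assms(2)] by blast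
  then have "mv (r i) (r (Suc i)) (D i) ?c l = 0" by (simp add: vzero_def)
  moreover have "mv (r i) (r (Suc i)) (D i) ?c l = (\<Sum>k<r (Suc i). D i l k * D (Suc i) k j)"
    using assms(1) by (simp add: mv_def[of "r i"] mv_unit_vec[OF assms(2)])
  ultimately show ?thesis by simp
qed

lemma codiff_codiff_free_res: "j < r (Suc (Suc i)) \<Longrightarrow>
    codiff (r (Suc i)) (D (Suc i)) (codiff (r i) (D i) \<alpha>) j = vzero"
  unfolding codiff_codiff by (rule codiff_eq_vzero) (rule free_res_D_D)

lemma not_Ext_nz_cocycle:
  assumes "\<not> Ext_nz i S M" "\<forall>k<r i. \<phi> k \<in> fst M" "\<forall>j<r (Suc i). codiff (r i) (D i) \<phi> j \<in> snd M"
  shows "case i of 0 \<Rightarrow> (\<forall>k<r 0. \<phi> k \<in> snd M)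
           | Suc i' \<Rightarrow> (\<exists>\<psi>. (\<forall>k<r i'. \<psi> k \<in> fst M)
                \<and> (\<forall>k<r i. vsub (\<phi> k) (codiff (r i') (D i') \<psi> k) \<in> snd M))"
  using assms res unfolding Ext_nz_def by blast

lemma not_Ext_nz_0:
  assumes "\<not> Ext_nz 0 S M" "\<forall>k<r 0. \<phi> k \<in> fst M" "\<forall>j<r 1. codiff (r 0) (D 0) \<phi> j \<in> snd M"
  shows "\<forall>k<r 0. \<phi> k \<in> snd M"
  using not_Ext_nz_cocycle[of 0 M \<phi>] assms by simp

lemma not_Ext_nz_Suc:
  assumes "\<not> Ext_nz (Suc i) S M" "\<forall>k<r (Suc i). \<phi> k \<in> fst M"
    "\<forall>j<r (Suc (Suc i)). codiff (r (Suc i)) (D (Suc i)) \<phi> j \<in> snd M"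
  obtains \<psi> where "\<forall>k<r i. \<psi> k \<in> fst M" "\<forall>k<r (Suc i). vsub (\<phi> k) (codiff (r i) (D i) \<psi> k) \<in> snd M"
  using not_Ext_nz_cocycle[OF assms] by auto

end

lemma not_Ext_nz_below_dep:
  assumes "enat n \<le> dep Dm M" "t < n" "sq_valid S" "sq_fg S" "Dm S \<le> 0"
  shows "\<not> Ext_nz t S M"
proof
  assume "Ext_nz t S M"
  then have "dep Dm M \<le> enat t"
    unfolding dep_def using assms(3-5) by (intro INF_lower) blast
  with assms(1) have "enat n \<le> enat t" by (rule order_trans)
  then show False using assms(2) by simp
qed

subsection \<open>Comparing a resolution of the lowest cohomology with the complex\<close>

locale resolved_cohomology =
  fixes X :: "nat \<Rightarrow> 'a::ring_1 sq" and f :: "nat \<Rightarrow> 'a vec \<Rightarrow> 'a vec"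
    and m :: nat and r :: "nat \<Rightarrow> nat" and g :: "nat \<Rightarrow> 'a vec" and D :: "nat \<Rightarrow> nat \<Rightarrow> nat \<Rightarrow> 'a"
  assumes complex: "is_complex X f"
    and resolution: "free_res (cohom X f m) r g D"
    and exact_below: "\<And>j. j < m \<Longrightarrow> cocycles X f j = coboundaries X f j"
begin

text \<open>Families indexed by \<open>k < r t\<close> are homomorphisms from the free module \<open>F\<^sub>t = A\<^bsup>r t\<^esup>\<close>
  of the resolution; \<open>codiff (r t) (D t) \<beta>\<close> is \<open>\<beta> \<circ> D\<^sub>t\<close>.\<close>

definition hom_cochain :: "nat \<Rightarrow> nat \<Rightarrow> (nat \<Rightarrow> 'a vec) \<Rightarrow> bool" where
  "hom_cochain t i \<beta> \<longleftrightarrow> (\<forall>k<r t. \<beta> k \<in> fst (X i))"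

definition hom_cocycle :: "nat \<Rightarrow> nat \<Rightarrow> (nat \<Rightarrow> 'a vec) \<Rightarrow> bool" where
  "hom_cocycle t i \<beta> \<longleftrightarrow> (\<forall>j<r (Suc t). codiff (r t) (D t) \<beta> j \<in> snd (X i))"

definition lifts :: "nat \<Rightarrow> nat \<Rightarrow> (nat \<Rightarrow> 'a vec) \<Rightarrow> (nat \<Rightarrow> 'a vec) \<Rightarrow> bool" where
  "lifts t i \<alpha> \<beta> \<longleftrightarrow>
     (\<forall>k<r (Suc t). vcong (snd (X (Suc i))) (f i (\<beta> k)) (codiff (r t) (D t) \<alpha> k))"

lemma cohom_fst: "fst (cohom X f m) = cocycles X f m"
  and cohom_snd: "snd (cohom X f m) = coboundaries X f m"
  by (simp_all add: cohom_def)

lemma lift_codiff_cocycle: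
  assumes \<beta>: "hom_cochain (Suc t) i \<beta>" and lift: "lifts t i \<alpha> \<beta>" and j: "j < r (Suc (Suc t))"
  shows "codiff (r (Suc t)) (D (Suc t)) \<beta> j \<in> cocycles X f i"
proof -
  note K = complex_rsubmods(2)[OF complex, of "Suc i"]
  have \<beta>k: "\<And>k. k < r (Suc t) \<Longrightarrow> \<beta> k \<in> fst (X i)" using \<beta> by (simp add: hom_cochain_def)
  have "vcong (snd (X (Suc i))) (f i (codiff (r (Suc t)) (D (Suc t)) \<beta> j))
      (codiff (r (Suc t)) (D (Suc t)) (\<lambda>k. f i (\<beta> k)) j)"
    by (rule hom_lift_codiff[OF complex_hom_lift[OF complex] complex_valid[OF complex]
          complex_valid[OF complex] \<beta>k])
  moreover have "vcong (snd (X (Suc i))) (codiff (r (Suc t)) (D (Suc t)) (\<lambda>k. f i (\<beta> k)) j)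
      (codiff (r (Suc t)) (D (Suc t)) (codiff (r t) (D t) \<alpha>) j)"
    using lift by (intro vcong_codiff[OF K]) (simp add: lifts_def)
  moreover have "codiff (r (Suc t)) (D (Suc t)) (codiff (r t) (D t) \<alpha>) j = vzero"
    by (rule codiff_codiff_free_res[OF resolution j])
  ultimately have "f i (codiff (r (Suc t)) (D (Suc t)) \<beta> j) \<in> snd (X (Suc i))"
    using vcong_trans[OF K] by (metis vcong_vzero_iff)
  moreover have "codiff (r (Suc t)) (D (Suc t)) \<beta> j \<in> fst (X i)"
    by (rule rsubmod_codiff[OF complex_rsubmods(1)[OF complex] \<beta>k])
  ultimately show ?thesis by (simp add: cocycles_def)
qed

lemma exists_lift:
  assumes "\<And>j. j < r (Suc t) \<Longrightarrow> codiff (r t) (D t) \<alpha> j \<in> coboundaries X f (Suc i)"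
  shows "\<exists>\<beta>. hom_cochain (Suc t) i \<beta> \<and> lifts t i \<alpha> \<beta>"
proof -
  have "\<exists>u. u \<in> fst (X i) \<and> vcong (snd (X (Suc i))) (f i u) (codiff (r t) (D t) \<alpha> j)"
    if j: "j < r (Suc t)" for j
  proof -
    obtain u where "u \<in> fst (X i)" "vcong (snd (X (Suc i))) (codiff (r t) (D t) \<alpha> j) (f i u)"
      using assms[OF j] coboundaries_Suc_iff[OF complex] by blast
    then show ?thesis using vcong_sym[OF complex_rsubmods(2)[OF complex]] by blast
  qed
  then obtain \<beta> where "\<And>j. j < r (Suc t) \<Longrightarrow>
      \<beta> j \<in> fst (X i) \<and> vcong (snd (X (Suc i))) (f i (\<beta> j)) (codiff (r t) (D t) \<alpha> j)"
    by metis
  then show ?thesis unfolding hom_cochain_def lifts_def by blast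
qed

text \<open>A chain map from the resolution to the complex read backwards, \<open>F\<^sub>t \<rightarrow> X\<^bsup>m - t\<^esup>\<close>,
  lifting the generators of \<open>H\<^sup>m\<close>; the lifts exist because \<open>H\<^sup>j = 0\<close> for \<open>j < m\<close>.\<close>

definition chain_map :: "nat \<Rightarrow> nat \<Rightarrow> 'a vec" where
  "chain_map = rec_nat g (\<lambda>t \<alpha>. SOME \<beta>. hom_cochain (Suc t) (m - Suc t) \<beta> \<and> lifts t (m - Suc t) \<alpha> \<beta>)"

lemma chain_map_0: "chain_map 0 = g"
  by (simp add: chain_map_def)

lemma chain_map_Suc:
  "t < m \<Longrightarrow> hom_cochain (Suc t) (m - Suc t) (chain_map (Suc t))
     \<and> lifts t (m - Suc t) (chain_map t) (chain_map (Suc t))"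
proof (induction t)
  case 0
  have "codiff (r 0) (D 0) g j \<in> coboundaries X f (Suc (m - Suc 0))" if "j < r (Suc 0)" for j
    using free_res_codiff_0[OF resolution] that 0 by (simp add: cohom_snd)
  then have "\<exists>\<beta>. hom_cochain (Suc 0) (m - Suc 0) \<beta> \<and> lifts 0 (m - Suc 0) (chain_map 0) \<beta>"
    unfolding chain_map_0 by (rule exists_lift)
  from someI_ex[OF this] show ?case by (simp add: chain_map_def)
next
  case (Suc t)
  then have IH: "hom_cochain (Suc t) (m - Suc t) (chain_map (Suc t))"
    "lifts t (m - Suc t) (chain_map t) (chain_map (Suc t))" by simp_all
  have m: "m - Suc t = Suc (m - Suc (Suc t))" "m - Suc t < m" using Suc.prems by simp_all
  have "codiff (r (Suc t)) (D (Suc t)) (chain_map (Suc t)) j \<in> coboundaries X f (Suc (m - Suc (Suc t)))"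
    if "j < r (Suc (Suc t))" for j
    using lift_codiff_cocycle[OF IH that] exact_below[OF m(2)] m(1) by simp
  then have "\<exists>\<beta>. hom_cochain (Suc (Suc t)) (m - Suc (Suc t)) \<beta>
      \<and> lifts (Suc t) (m - Suc (Suc t)) (chain_map (Suc t)) \<beta>"
    by (rule exists_lift)
  from someI_ex[OF this] show ?case by (simp add: chain_map_def)
qed

lemma hom_cochain_chain_map:
  assumes "t \<le> m"
  shows "hom_cochain t (m - t) (chain_map t)"
proof (cases t)
  case 0
  then show ?thesis
    using free_res_gen[OF resolution] by (simp add: hom_cochain_def chain_map_0 cohom_fst cocycles_def)
next
  case (Suc t')
  then show ?thesis using assms chain_map_Suc[of t'] by simp
qed

text \<open>\<open>\<beta>\<close> is a cocycle of \<open>Hom(F\<^sub>t, X\<^bsup>m - t\<^esup>)\<close> which, after applying the differential of the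
  complex, agrees with the chain map (for \<open>t = 0\<close>: agrees with it modulo coboundaries).\<close>

definition lifted_cocycle :: "nat \<Rightarrow> (nat \<Rightarrow> 'a vec) \<Rightarrow> bool" where
  "lifted_cocycle t \<beta> \<longleftrightarrow> hom_cochain t (m - t) \<beta> \<and> hom_cocycle t (m - t) \<beta> \<and>
     (case t of 0 \<Rightarrow> \<forall>k<r 0. vcong (coboundaries X f m) (\<beta> k) (g k)
      | Suc t' \<Rightarrow> lifts t' (m - t) (chain_map t') \<beta>)"

lemma hom_cocycle_correction:
  assumes \<beta>: "hom_cochain (Suc t) i \<beta>" and lift: "lifts t i \<alpha> \<beta>" and \<psi>: "hom_cochain t i \<psi>"
    and homotopy: "\<And>k. k < r (Suc t) \<Longrightarrow> vcong (snd (X i)) (\<beta> k) (codiff (r t) (D t) \<psi> k)"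
  shows "hom_cocycle t (Suc i) (\<lambda>k. vsub (\<alpha> k) (f i (\<psi> k)))"
  unfolding hom_cocycle_def
proof (intro allI impI)
  fix j assume j: "j < r (Suc t)"
  note K = complex_rsubmods(2)[OF complex, of "Suc i"]
  note hom = complex_hom_lift[OF complex, of i] and valid = complex_valid[OF complex]
  have \<psi>k: "\<And>k. k < r t \<Longrightarrow> \<psi> k \<in> fst (X i)" using \<psi> by (simp add: hom_cochain_def)
  have "vcong (snd (X (Suc i))) (codiff (r t) (D t) \<alpha> j) (f i (\<beta> j))"
    using lift j vcong_sym[OF K] by (simp add: lifts_def)
  moreover have "vcong (snd (X (Suc i))) (f i (\<beta> j)) (f i (codiff (r t) (D t) \<psi> j))"
    using \<beta> j homotopy[OF j] rsubmod_codiff[OF complex_rsubmods(1)[OF complex] \<psi>k]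
    by (intro hom_lift_vcong[OF hom valid valid]) (simp_all add: hom_cochain_def)
  moreover have "vcong (snd (X (Suc i))) (f i (codiff (r t) (D t) \<psi> j))
      (codiff (r t) (D t) (\<lambda>k. f i (\<psi> k)) j)"
    by (rule hom_lift_codiff[OF hom valid valid \<psi>k])
  ultimately have "vcong (snd (X (Suc i))) (codiff (r t) (D t) \<alpha> j) (codiff (r t) (D t) (\<lambda>k. f i (\<psi> k)) j)"
    using vcong_trans[OF K] by blast
  then show "codiff (r t) (D t) (\<lambda>k. vsub (\<alpha> k) (f i (\<psi> k))) j \<in> snd (X (Suc i))"
    by (simp add: codiff_diff_family vcong_def)
qed

lemma lifts_correction:
  assumes lift: "lifts t (Suc i) \<alpha>' \<alpha>" and \<alpha>: "hom_cochain (Suc t) (Suc i) \<alpha>"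
    and \<psi>: "hom_cochain (Suc t) i \<psi>"
  shows "lifts t (Suc i) \<alpha>' (\<lambda>k. vsub (\<alpha> k) (f i (\<psi> k)))"
  unfolding lifts_def
proof (intro allI impI)
  fix k assume k: "k < r (Suc t)"
  note K = complex_rsubmods(2)[OF complex, of "Suc (Suc i)"]
  have \<alpha>k: "\<alpha> k \<in> fst (X (Suc i))" and \<psi>k: "\<psi> k \<in> fst (X i)"
    using \<alpha> \<psi> k by (simp_all add: hom_cochain_def)
  have "vcong (snd (X (Suc (Suc i)))) (f (Suc i) (vsub (\<alpha> k) (f i (\<psi> k))))
      (vsub (f (Suc i) (\<alpha> k)) (f (Suc i) (f i (\<psi> k))))"
    by (rule hom_lift_vsub[OF complex_hom_lift[OF complex] complex_valid[OF complex]
          complex_valid[OF complex] \<alpha>k hom_lift_fst[OF complex_hom_lift[OF complex] \<psi>k]])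
  moreover have "vcong (snd (X (Suc (Suc i)))) (vsub (f (Suc i) (\<alpha> k)) (f (Suc i) (f i (\<psi> k))))
      (vsub (codiff (r t) (D t) \<alpha>' k) vzero)"
    using lift k complex_comp[OF complex \<psi>k]
    by (intro vcong_diff[OF K]) (simp_all add: lifts_def vcong_vzero_iff)
  moreover have "vsub (codiff (r t) (D t) \<alpha>' k) vzero = codiff (r t) (D t) \<alpha>' k"
    by (simp add: vsub_def vzero_def)
  ultimately show "vcong (snd (X (Suc (Suc i)))) (f (Suc i) (vsub (\<alpha> k) (f i (\<psi> k))))
      (codiff (r t) (D t) \<alpha>' k)"
    using vcong_trans[OF K] by metis
qed

lemma lifted_cocycle_top: "lifted_cocycle m (chain_map m)"
proof (cases m)
  case 0
  have "codiff (r 0) (D 0) g j \<in> snd (X (m - m))" if "j < r 1" for j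
    using free_res_codiff_0[OF resolution that] 0 by (simp add: cohom_def coboundaries_def)
  moreover have "chain_map m = g" using chain_map_0 0 by simp
  ultimately show ?thesis
    unfolding lifted_cocycle_def hom_cocycle_def
    using hom_cochain_chain_map[of m] vcong_refl[OF rsubmod_coboundaries[OF complex]] 0 by simp
next
  case (Suc m')
  then have lift: "hom_cochain m 0 (chain_map m)" "lifts m' 0 (chain_map m') (chain_map m)"
    using chain_map_Suc[of m'] by simp_all
  have "cocycles X f 0 = snd (X 0)"
    using exact_below[of 0] Suc by (simp add: coboundaries_def)
  then have "hom_cocycle m 0 (chain_map m)"
    using lift_codiff_cocycle[OF lift[unfolded Suc]] Suc by (simp add: hom_cocycle_def)
  then show ?thesis unfolding lifted_cocycle_def using lift Suc by simp
qed

lemma lifted_cocycle_descend: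
  assumes t: "t < m" and no_Ext: "\<not> Ext_nz (Suc t) (cohom X f m) (X (m - Suc t))"
    and \<beta>: "lifted_cocycle (Suc t) \<beta>"
  shows "\<exists>\<gamma>. lifted_cocycle t \<gamma>"
proof -
  define i where "i = m - Suc t"
  have mt: "m - t = Suc i" using t by (simp add: i_def)
  have \<beta>': "hom_cochain (Suc t) i \<beta>" "hom_cocycle (Suc t) i \<beta>" "lifts t i (chain_map t) \<beta>"
    using \<beta> by (simp_all add: lifted_cocycle_def i_def)
  obtain \<psi> where \<psi>: "hom_cochain t i \<psi>"
    and homotopy: "\<And>k. k < r (Suc t) \<Longrightarrow> vcong (snd (X i)) (\<beta> k) (codiff (r t) (D t) \<psi> k)"
    using not_Ext_nz_Suc[OF resolution no_Ext[folded i_def]] \<beta>'(1,2)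
    by (auto simp: hom_cochain_def hom_cocycle_def vcong_def)
  define \<gamma> where "\<gamma> k = vsub (chain_map t k) (f i (\<psi> k))" for k
  have \<alpha>: "hom_cochain t (Suc i) (chain_map t)"
    using hom_cochain_chain_map[of t] t mt by simp
  have cochain: "hom_cochain t (Suc i) \<gamma>"
    using \<alpha> \<psi> hom_lift_fst[OF complex_hom_lift[OF complex]]
      rsubmod_diff[OF complex_rsubmods(1)[OF complex]]
    by (simp add: hom_cochain_def \<gamma>_def)
  have cocycle: "hom_cocycle t (Suc i) \<gamma>"
    unfolding \<gamma>_def by (rule hom_cocycle_correction[OF \<beta>'(1,3) \<psi> homotopy])
  have base: "\<forall>k<r 0. vcong (coboundaries X f m) (\<gamma> k) (g k)" if "t = 0"
  proof (intro allI impI)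
    fix k assume k: "k < r 0"
    have "f i (\<psi> k) \<in> coboundaries X f m"
      using image_in_coboundaries[OF complex] \<psi> k that mt by (simp add: hom_cochain_def)
    then have "vsmul (f i (\<psi> k)) (-1) \<in> coboundaries X f m"
      by (rule rsubmod_smul[OF rsubmod_coboundaries[OF complex]])
    moreover have "vsub (\<gamma> k) (g k) = vsmul (f i (\<psi> k)) (-1)"
      using that by (simp add: \<gamma>_def chain_map_0 vsub_def vsmul_def)
    ultimately show "vcong (coboundaries X f m) (\<gamma> k) (g k)" by (simp add: vcong_def)
  qed
  have step: "lifts t' (Suc i) (chain_map t') \<gamma>" if "t = Suc t'" for t'
    unfolding \<gamma>_def
    by (rule lifts_correction) (use chain_map_Suc[of t'] t mt \<alpha> \<psi> that in simp_all)
  have "lifted_cocycle t \<gamma>"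
    unfolding lifted_cocycle_def mt using cochain cocycle base step by (simp split: nat.split)
  then show ?thesis by blast
qed

lemma lifted_cocycle_bottom:
  assumes no_Ext: "\<not> Ext_nz 0 (cohom X f m) (X m)" and \<beta>: "lifted_cocycle 0 \<beta>"
  shows "cocycles X f m \<subseteq> coboundaries X f m"
proof
  note B = rsubmod_coboundaries[OF complex, of m]
  have "\<forall>k<r 0. \<beta> k \<in> snd (X m)"
    using not_Ext_nz_0[OF resolution no_Ext] \<beta> by (simp add: lifted_cocycle_def hom_cochain_def hom_cocycle_def)
  then have g: "g k \<in> coboundaries X f m" if "k < r 0" for k
    using \<beta> that snd_subset_coboundaries[OF complex] vcong_mem[OF B vcong_sym[OF B]]
    by (simp add: lifted_cocycle_def) blast
  fix v assume "v \<in> cocycles X f m"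
  then obtain c where "vsub v (aug (r 0) g c) \<in> coboundaries X f m"
    using free_res_onto[OF resolution] by (auto simp: cohom_fst cohom_snd)
  moreover have "aug (r 0) g c \<in> coboundaries X f m" by (rule rsubmod_aug[OF B g])
  ultimately show "v \<in> coboundaries X f m" using vcong_mem[OF B] by (simp add: vcong_def)
qed

lemma cohom_vanishes:
  assumes "\<And>t. t \<le> m \<Longrightarrow> \<not> Ext_nz t (cohom X f m) (X (m - t))"
  shows "sq_zero (cohom X f m)"
proof -
  have descent: "\<exists>\<beta>. lifted_cocycle (m - n) \<beta>" if "n \<le> m" for n
    using that
  proof (induction n)
    case 0
    then show ?case using lifted_cocycle_top by auto
  next
    case (Suc n)
    then obtain \<beta> where "lifted_cocycle (Suc (m - Suc n)) \<beta>" by (auto simp: Suc_diff_Suc)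
    then show ?case using lifted_cocycle_descend assms Suc.prems by simp
  qed
  from descent[of m] obtain \<beta> where "lifted_cocycle 0 \<beta>" by auto
  with assms[of 0] have "cocycles X f m \<subseteq> coboundaries X f m"
    by (intro lifted_cocycle_bottom) simp_all
  then show ?thesis
    using coboundaries_subset_cocycles[OF complex] by (auto simp: sq_zero_def cohom_def)
qed

end

lemma cohom_vanishes_below_depth:
  fixes X :: "nat \<Rightarrow> 'a::ring_1 sq" and Dm :: "'a sq \<Rightarrow> ereal"
  assumes noeth: "noetherian_ring TYPE('a)" and X: "is_complex X f"
    and depth: "\<forall>i. enat (d - i) \<le> dep Dm (X i)" and small: "Dm (cohom X f m) \<le> 0"
    and md: "m < d" and below: "\<forall>j<m. sq_zero (cohom X f j)"
  shows "sq_zero (cohom X f m)"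
proof -
  note valid = sq_valid_cohom[OF X] and fg = noetherian_sq_fg_cohom[OF noeth X]
  obtain r g D where "free_res (cohom X f m) r g D"
    by (rule noetherian_free_res_exists[OF noeth valid fg])
  then interpret resolved_cohomology X f m r g D
    using X below by unfold_locales (simp_all add: sq_zero_def cohom_def)
  show ?thesis
  proof (rule cohom_vanishes)
    fix t assume "t \<le> m"
    then have "t < d - (m - t)" using md by simp
    with depth show "\<not> Ext_nz t (cohom X f m) (X (m - t))"
      using not_Ext_nz_below_dep valid fg small by blast
  qed
qed

theorem proposition5p10:
  fixes \<iota> :: "'k::field \<Rightarrow> 'a::ring_1"
    and Dm :: "'a sq \<Rightarrow> ereal"
    and X :: "nat \<Rightarrow> 'a sq"
    and f :: "nat \<Rightarrow> 'a vec \<Rightarrow> 'a vec"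
    and d :: nat
  assumes "algebra_over \<iota>"
    and "noetherian_ring TYPE('a)"
    and "dimfun Dm"
    and "0 < d"
    and "is_complex X f"
    and "\<forall>i. enat (d - i) \<le> dep Dm (X i)"
    and "\<forall>i\<ge>d. sq_zero (cohom X f i)"
    and "\<forall>i. Dm (cohom X f i) \<le> 0"
  shows "\<forall>i. sq_zero (cohom X f i)"
proof
  fix i show "sq_zero (cohom X f i)"
  proof (induction i rule: less_induct)
    case (less i)
    show ?case
    proof (cases "i < d")
      case True
      with less.IH show ?thesis
        using cohom_vanishes_below_depth[OF assms(2,5,6)] assms(8) by blast
    next
      case False
      then show ?thesis using assms(7) by simp
    qed
  qed
qed

end
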